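(* Let $p\in\{2,3\}$, and let \[ F(z) = {}_{2}F_{1} \left( \tfrac{1}{6}, \tfrac{5}{6} ; 1 ; 432z \right) = \sum_{m=0}^{\infty} A(m) z^{m}, \qquad F_{s}(z) = \sum_{m=0}^{p^{s}-1} A(m) z^{m}, \] where $A(m) = \frac{(6m)!}{(3m)!(2m)!m!} = \binom{3m}{m}\binom{6m}{3m}$. Then for every $s \in \mathbb{Z}_{\ge0}$ and $n\ge0$, \[ \frac{F(z)}{F(z^{p})} \equiv \frac{F_{s+1}(z)}{F_{s}(z^{p})} \pmod{p^{s+1}}, \qquad \frac{F^{(n)}(z)}{F(z)} \equiv \frac{F^{(n)}_{s+1}(z)}{F_{s+1}(z)} \pmod{p^{s+1}} , \] where $F^{(n)}$ denotes the $n$-th derivative.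
   Context: ${}_2F_1(a,b;c;z)=\sum_{m\ge0}\frac{(a)_m(b)_m}{(c)_m m!}z^m$. All series involved lie in $\mathbb{Z}[\![z]\!]$ with constant term 1 (hence are invertible); a congruence modulo $p^{s+1}$ means all coefficients of the difference are divisible by $p^{s+1}$. *)

theory Defs
  imports "HOL-Computational_Algebra.Formal_Power_Series"
begin

definition hyp2F1 :: "rat \<Rightarrow> rat \<Rightarrow> rat \<Rightarrow> rat fps" where
  "hyp2F1 a b c = Abs_fps (\<lambda>m. pochhammer a m * pochhammer b m / (pochhammer c m * fact m))"

definition fps_scale :: "rat \<Rightarrow> rat fps \<Rightarrow> rat fps" where
  "fps_scale w f = Abs_fps (\<lambda>m. w ^ m * fps_nth f m)"

definition F :: "rat fps" where
  "F = fps_scale 432 (hyp2F1 (1/6) (5/6) 1)"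

definition A :: "nat \<Rightarrow> nat" where
  "A m = fact (6*m) div (fact (3*m) * fact (2*m) * fact m)"

definition Ftr :: "nat \<Rightarrow> nat \<Rightarrow> rat fps" where
  "Ftr p s = Abs_fps (\<lambda>m. if m < p ^ s then of_nat (A m) else 0)"

definition fps_cong :: "int \<Rightarrow> rat fps \<Rightarrow> rat fps \<Rightarrow> bool" where
  "fps_cong M f g \<longleftrightarrow> (\<forall>k. \<exists>c::int. fps_nth (f - g) k = of_int (M * c))"

end

(* Dwork's method for A(m) = (6m)!/((3m)! (2m)! m!).
   For a digit v < p write A(v + p x) = A(x) r_v(x).  Splitting off the multiples of p in the
   factorials gives r_0(x) = U(p x) and, for p in {2,3} and v > 0, r_v(x) = p k_v (6x + 1) U(v + p x),
   where U is the quotient of the p-free parts of (6n)!, (3n)!, (2n)!, n!.  Since the p-free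
   factorial satisfies (n + L p^t)!_p == n!_p ((p^t)!_p)^L mod p^t, U and hence r_0 and r_v / p are
   p-adic contractions.
   The coefficient of z^n in F(z) F_s(z^p) - F_(s+1)(z) F(z^p) is a skew sum
   sum_(j < p^s) A(N-j) A(j) (phi(N-j, j) - phi(j, N-j)), where n = v + p N and phi(x, y) = r_v(x).
   Such sums are divisible by p^(s+1) for every contraction phi: splitting off the last digits of
   both indices, the cross terms cancel by antisymmetry and each remaining term is a sum of the same
   shape with a new phi that is symmetric plus p times a contraction, so induction on s applies.
   Dividing by units gives the first congruence.  For the second, F/F_(t+1) == (F/F_t)(z^p)
   mod p^(t+1), so the derivative of F/F_t is divisible by p^t, and the n-th derivatives follow. *)
theory Submission
  imports Defs "HOL-Number_Theory.Cong"
begin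

unbundle fps_syntax

section \<open>Divisibility by powers of p in the rationals\<close>

definition p_integral :: "nat \<Rightarrow> rat \<Rightarrow> bool" where
  "p_integral p x \<longleftrightarrow> (\<exists>a b::int. b \<noteq> 0 \<and> coprime b (int p) \<and> x = of_int a / of_int b)"

definition p_pow_dvd :: "nat \<Rightarrow> nat \<Rightarrow> rat \<Rightarrow> bool" where
  "p_pow_dvd p k x \<longleftrightarrow> p_integral p (x / of_nat p ^ k)"

lemma p_integral_of_int [simp]: "p_integral p (of_int a)"
  unfolding p_integral_def by (rule exI[of _ a], rule exI[of _ 1]) simp

lemma p_integral_of_nat [simp]: "p_integral p (of_nat a)"
  using p_integral_of_int[of p "int a"] by simp

lemma p_integral_0 [simp]: "p_integral p 0"
  using p_integral_of_nat[of p 0] by simp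

lemma p_integral_Ints: "x \<in> \<int> \<Longrightarrow> p_integral p x"
  by (elim Ints_cases) simp

lemma p_integral_divide: "b \<noteq> 0 \<Longrightarrow> coprime b (int p) \<Longrightarrow> p_integral p (of_int a / of_int b)"
  unfolding p_integral_def by blast

lemma p_integral_divide_nat: "coprime y p \<Longrightarrow> y > 0 \<Longrightarrow> p_integral p (of_nat x / of_nat y)"
  using p_integral_divide[of "int y" p "int x"] by simp

lemma p_integral_add:
  assumes "p_integral p x" "p_integral p y"
  shows "p_integral p (x + y)"
proof -
  obtain a b c d where ab: "b \<noteq> 0" "coprime b (int p)" "x = of_int a / of_int b"
    and cd: "d \<noteq> 0" "coprime d (int p)" "y = of_int c / of_int d"
    using assms unfolding p_integral_def by blast
  then have "x + y = of_int (a * d + c * b) / of_int (b * d)" (is "_ = of_int ?n / _")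
    by (simp add: field_simps)
  moreover have "p_integral p (of_int ?n / of_int (b * d))"
    using ab cd by (intro p_integral_divide) auto
  ultimately show ?thesis
    by simp
qed

lemma p_integral_mult:
  assumes "p_integral p x" "p_integral p y"
  shows "p_integral p (x * y)"
proof -
  obtain a b c d where ab: "b \<noteq> 0" "coprime b (int p)" "x = of_int a / of_int b"
    and cd: "d \<noteq> 0" "coprime d (int p)" "y = of_int c / of_int d"
    using assms unfolding p_integral_def by blast
  then have "x * y = of_int (a * c) / of_int (b * d)" (is "_ = of_int ?n / _")
    by simp
  moreover have "p_integral p (of_int ?n / of_int (b * d))"
    using ab cd by (intro p_integral_divide) auto
  ultimately show ?thesis
    by simp
qed

lemma p_integral_diff:
  assumes "p_integral p x" "p_integral p y"
  shows "p_integral p (x - y)"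
proof -
  have "p_integral p (x + of_int (-1) * y)"
    using assms p_integral_of_int by (intro p_integral_add p_integral_mult)
  then show ?thesis
    by simp
qed

lemma p_pow_dvd_0 [simp]: "p_pow_dvd p k 0"
  unfolding p_pow_dvd_def by simp

lemma p_pow_dvd_add: "p_pow_dvd p k x \<Longrightarrow> p_pow_dvd p k y \<Longrightarrow> p_pow_dvd p k (x + y)"
  unfolding p_pow_dvd_def by (metis add_divide_distrib p_integral_add)

lemma p_pow_dvd_diff: "p_pow_dvd p k x \<Longrightarrow> p_pow_dvd p k y \<Longrightarrow> p_pow_dvd p k (x - y)"
  unfolding p_pow_dvd_def by (metis diff_divide_distrib p_integral_diff)

lemma p_pow_dvd_sum: "(\<And>i. i \<in> I \<Longrightarrow> p_pow_dvd p k (f i)) \<Longrightarrow> p_pow_dvd p k (sum f I)"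
  by (induction I rule: infinite_finite_induct) (auto intro: p_pow_dvd_add)

lemma p_pow_dvd_mult_left: "p_integral p c \<Longrightarrow> p_pow_dvd p k x \<Longrightarrow> p_pow_dvd p k (c * x)"
  unfolding p_pow_dvd_def by (metis times_divide_eq_right p_integral_mult)

lemma p_pow_dvd_mult_right: "p_integral p c \<Longrightarrow> p_pow_dvd p k x \<Longrightarrow> p_pow_dvd p k (x * c)"
  using p_pow_dvd_mult_left by (metis mult.commute)

lemma p_pow_dvd_mult_p: "p > 0 \<Longrightarrow> p_pow_dvd p k x \<Longrightarrow> p_pow_dvd p (Suc k) (of_nat p * x)"
  unfolding p_pow_dvd_def by simp

lemma p_pow_dvd_diff_mult:
  assumes "p_integral p x'" "p_integral p y" "p_pow_dvd p k (x' - x)" "p_pow_dvd p k (y' - y)"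
  shows "p_pow_dvd p k (x' * y' - x * y)"
proof -
  have "x' * y' - x * y = x' * (y' - y) + (x' - x) * y"
    by (simp add: algebra_simps)
  then show ?thesis
    using assms by (simp add: p_pow_dvd_add p_pow_dvd_mult_left p_pow_dvd_mult_right)
qed

lemma p_pow_dvd_divide_p: "p_pow_dvd p (Suc k) x \<Longrightarrow> p_pow_dvd p k (x / of_nat p)"
  unfolding p_pow_dvd_def by (simp add: field_simps)

lemma p_pow_dvd_Suc:
  assumes "p > 0" "p_pow_dvd p (Suc k) x"
  shows "p_pow_dvd p k x"
proof -
  have "x / of_nat p ^ k = of_nat p * (x / of_nat p ^ Suc k)"
    using assms(1) by simp
  then show ?thesis
    using assms(2) unfolding p_pow_dvd_def by (metis p_integral_mult p_integral_of_nat)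
qed

lemma p_pow_dvd_0_iff: "p_pow_dvd p 0 x \<longleftrightarrow> p_integral p x"
  unfolding p_pow_dvd_def by simp

lemma p_pow_dvd_of_nat: "p > 0 \<Longrightarrow> p ^ k dvd n \<Longrightarrow> p_pow_dvd p k (of_nat n)"
  unfolding p_pow_dvd_def by (elim dvdE) simp

lemma p_pow_dvd_of_int_iff:
  assumes "p > 0"
  shows "p_pow_dvd p k (of_int a) \<longleftrightarrow> int p ^ k dvd a"
proof
  assume "p_pow_dvd p k (of_int a)"
  then obtain c b where cb: "b \<noteq> 0" "coprime b (int p)"
    "of_int a / of_nat p ^ k = (of_int c / of_int b :: rat)"
    unfolding p_pow_dvd_def p_integral_def by blast
  then have "of_int (a * b) = (of_int (c * int p ^ k) :: rat)"
    using assms by (simp add: field_simps)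
  then have "int p ^ k dvd a * b"
    by (metis dvd_triv_right of_int_eq_iff)
  moreover have "coprime (int p ^ k) b"
    using cb by (simp add: coprime_commute)
  ultimately show "int p ^ k dvd a"
    using coprime_dvd_mult_left_iff by blast
next
  assume "int p ^ k dvd a"
  then show "p_pow_dvd p k (of_int a)"
    unfolding p_pow_dvd_def using assms by (elim dvdE) simp
qed

lemma p_pow_dvd_frac_diff:
  fixes x y x' y' :: nat
  assumes "coprime y p" "coprime y' p" "y > 0" "y' > 0" "[x * y' = x' * y] (mod p ^ k)"
  shows "p_pow_dvd p k (of_nat x / of_nat y - of_nat x' / of_nat y')"
proof -
  obtain c where c: "int (x * y') - int (x' * y) = int p ^ k * c"
    using assms(5) by (metis cong_iff_dvd_diff cong_int_iff dvdE of_nat_power)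
  have "of_nat x / of_nat y - of_nat x' / of_nat y' = of_nat p ^ k * (of_int c / of_int (int (y * y')) :: rat)"
    using assms(3,4) arg_cong[OF c, of "of_int :: int \<Rightarrow> rat"] by (simp add: field_simps)
  moreover have "p_integral p (of_int c / of_int (int (y * y')))"
    using assms(1-4) by (intro p_integral_divide) auto
  ultimately show ?thesis
    unfolding p_pow_dvd_def using assms(3) by (cases "p = 0") auto
qed

section \<open>p-adic contractions\<close>

text \<open>Contractions with factor \<open>1/p\<close> for the \<open>p\<close>-adic metric on the naturals.\<close>

definition p_contraction :: "nat \<Rightarrow> (nat \<Rightarrow> rat) \<Rightarrow> bool" where
  "p_contraction p g \<longleftrightarrow>
     (\<forall>x. p_integral p (g x)) \<and> (\<forall>t a x. p_pow_dvd p (Suc t) (g (x + a * p ^ t) - g x))"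

definition p_contraction2 :: "nat \<Rightarrow> (nat \<Rightarrow> nat \<Rightarrow> rat) \<Rightarrow> bool" where
  "p_contraction2 p \<phi> \<longleftrightarrow> (\<forall>x y. p_integral p (\<phi> x y)) \<and>
     (\<forall>t a b x y. p_pow_dvd p (Suc t) (\<phi> (x + a * p ^ t) (y + b * p ^ t) - \<phi> x y))"

lemma p_contractionI:
  "(\<And>x. p_integral p (g x)) \<Longrightarrow> (\<And>t a x. p_pow_dvd p (Suc t) (g (x + a * p ^ t) - g x))
    \<Longrightarrow> p_contraction p g"
  unfolding p_contraction_def by blast

lemma p_contraction_integral: "p_contraction p g \<Longrightarrow> p_integral p (g x)"
  unfolding p_contraction_def by blast

lemma p_contraction_shift:
  "p_contraction p g \<Longrightarrow> p_pow_dvd p (Suc t) (g (x + a * p ^ t) - g x)"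
  unfolding p_contraction_def by blast

lemma p_contraction2I:
  "(\<And>x y. p_integral p (\<phi> x y)) \<Longrightarrow>
    (\<And>t a b x y. p_pow_dvd p (Suc t) (\<phi> (x + a * p ^ t) (y + b * p ^ t) - \<phi> x y))
    \<Longrightarrow> p_contraction2 p \<phi>"
  unfolding p_contraction2_def by blast

lemma p_contraction2_integral: "p_contraction2 p \<phi> \<Longrightarrow> p_integral p (\<phi> x y)"
  unfolding p_contraction2_def by blast

lemma p_contraction2_shift:
  "p_contraction2 p \<phi> \<Longrightarrow> p_pow_dvd p (Suc t) (\<phi> (x + a * p ^ t) (y + b * p ^ t) - \<phi> x y)"
  unfolding p_contraction2_def by blast

lemma p_contraction_mult:
  assumes "p_contraction p f" "p_contraction p g"
  shows "p_contraction p (\<lambda>x. f x * g x)"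
proof (rule p_contractionI)
  show "p_integral p (f x * g x)" for x
    using assms by (simp add: p_integral_mult p_contraction_integral)
  show "p_pow_dvd p (Suc t) (f (x + a * p ^ t) * g (x + a * p ^ t) - f x * g x)" for t a x
    using assms by (simp add: p_pow_dvd_diff_mult p_contraction_integral p_contraction_shift)
qed

lemma p_contraction_mult_p:
  assumes "p > 0" "p_contraction p g"
  shows "p_contraction p (\<lambda>x. of_nat p * g x)"
proof (rule p_contractionI)
  show "p_integral p (of_nat p * g x)" for x
    using assms(2) by (simp add: p_integral_mult p_contraction_integral)
  show "p_pow_dvd p (Suc t) (of_nat p * g (x + a * p ^ t) - of_nat p * g x)" for t a x
    unfolding right_diff_distrib[symmetric]
    using p_pow_dvd_mult_p[OF assms(1) p_pow_dvd_Suc[OF assms(1) p_contraction_shift[OF assms(2)]]] .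
qed

lemma p_contraction_linear:
  assumes "p dvd 6" "p > 0"
  shows "p_contraction p (\<lambda>x. of_nat k * (6 * of_nat x + 1))"
proof (rule p_contractionI)
  show "p_integral p (of_nat k * (6 * of_nat x + 1))" for x
  proof -
    have "(of_nat k * (6 * of_nat x + 1) :: rat) = of_nat (k * (6 * x + 1))"
      by (simp add: algebra_simps)
    then show ?thesis
      by (simp only: p_integral_of_nat)
  qed
  fix t a x
  have dvd: "p ^ Suc t dvd 6 * k * a * p ^ t"
    using assms(1) by (simp add: mult_dvd_mono)
  have eq: "of_nat k * (6 * of_nat (x + a * p ^ t) + 1) - of_nat k * (6 * of_nat x + 1)
    = (of_nat (6 * k * a * p ^ t) :: rat)"
    by (simp add: algebra_simps)
  show "p_pow_dvd p (Suc t) (of_nat k * (6 * of_nat (x + a * p ^ t) + 1) - of_nat k * (6 * of_nat x + 1))"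
    unfolding eq by (rule p_pow_dvd_of_nat[OF assms(2) dvd])
qed

lemma p_contraction2_fst: "p_contraction p g \<Longrightarrow> p_contraction2 p (\<lambda>x y. g x)"
  unfolding p_contraction_def p_contraction2_def by blast

lemma p_contraction2_snd: "p_contraction p g \<Longrightarrow> p_contraction2 p (\<lambda>x y. g y)"
  unfolding p_contraction_def p_contraction2_def by blast

lemma p_contraction2_mult:
  assumes "p_contraction2 p \<phi>" "p_contraction2 p \<psi>"
  shows "p_contraction2 p (\<lambda>x y. \<phi> x y * \<psi> x y)"
proof (rule p_contraction2I)
  show "p_integral p (\<phi> x y * \<psi> x y)" for x y
    using assms by (simp add: p_integral_mult p_contraction2_integral)
  show "p_pow_dvd p (Suc t)
    (\<phi> (x + a * p ^ t) (y + b * p ^ t) * \<psi> (x + a * p ^ t) (y + b * p ^ t) - \<phi> x y * \<psi> x y)"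
    for t a b x y
    using assms by (simp add: p_pow_dvd_diff_mult p_contraction2_integral p_contraction2_shift)
qed

lemma p_contraction2_digits:
  assumes "p > 0" "p_contraction2 p \<phi>"
  shows "p_contraction2 p (\<lambda>x y. \<phi> (c + p * x) (d + p * y))"
proof (rule p_contraction2I)
  show "p_integral p (\<phi> (c + p * x) (d + p * y))" for x y
    by (rule p_contraction2_integral[OF assms(2)])
  fix t a b x y
  have shift: "c + p * (x + a * p ^ t) = (c + p * x) + a * p ^ Suc t"
    "d + p * (y + b * p ^ t) = (d + p * y) + b * p ^ Suc t"
    by (simp_all add: algebra_simps)
  show "p_pow_dvd p (Suc t) (\<phi> (c + p * (x + a * p ^ t)) (d + p * (y + b * p ^ t)) - \<phi> (c + p * x) (d + p * y))"
    unfolding shift by (rule p_pow_dvd_Suc[OF assms(1) p_contraction2_shift[OF assms(2)]])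
qed

lemma p_contraction2_divide_p:
  assumes "p > 0" "p_contraction2 p \<phi>"
  shows "p_contraction2 p (\<lambda>x y. (\<phi> (p * x) (p * y) - \<phi> 0 0) / of_nat p)"
proof (rule p_contraction2I)
  show "p_integral p ((\<phi> (p * x) (p * y) - \<phi> 0 0) / of_nat p)" for x y
    using p_pow_dvd_divide_p[OF p_contraction2_shift[OF assms(2), of 0 0 "p * x" 0 "p * y"]]
    by (simp add: p_pow_dvd_0_iff)
  fix t a b x y
  have shift: "p * (x + a * p ^ t) = p * x + a * p ^ Suc t" "p * (y + b * p ^ t) = p * y + b * p ^ Suc t"
    by (simp_all add: algebra_simps)
  have eq: "(\<phi> (p * (x + a * p ^ t)) (p * (y + b * p ^ t)) - \<phi> 0 0) / of_nat p
     - (\<phi> (p * x) (p * y) - \<phi> 0 0) / of_nat p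
    = (\<phi> (p * x + a * p ^ Suc t) (p * y + b * p ^ Suc t) - \<phi> (p * x) (p * y)) / of_nat p"
    unfolding shift by (simp add: diff_divide_distrib)
  show "p_pow_dvd p (Suc t) ((\<phi> (p * (x + a * p ^ t)) (p * (y + b * p ^ t)) - \<phi> 0 0) / of_nat p
     - (\<phi> (p * x) (p * y) - \<phi> 0 0) / of_nat p)"
    unfolding eq by (rule p_pow_dvd_divide_p[OF p_contraction2_shift[OF assms(2)]])
qed

section \<open>Congruences between rational power series\<close>

definition int_coeffs :: "rat fps \<Rightarrow> bool" where
  "int_coeffs f \<longleftrightarrow> (\<forall>n. f $ n \<in> \<int>)"

lemma int_coeffs_diff: "int_coeffs f \<Longrightarrow> int_coeffs g \<Longrightarrow> int_coeffs (f - g)"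
  unfolding int_coeffs_def by auto

lemma int_coeffs_mult: "int_coeffs f \<Longrightarrow> int_coeffs g \<Longrightarrow> int_coeffs (f * g)"
  unfolding int_coeffs_def fps_mult_nth by (auto intro!: Ints_sum Ints_mult)

lemma int_coeffs_deriv: "int_coeffs f \<Longrightarrow> int_coeffs (fps_deriv f)"
  unfolding int_coeffs_def by (auto intro!: Ints_mult)

lemma int_coeffs_deriv_funpow: "int_coeffs f \<Longrightarrow> int_coeffs ((fps_deriv ^^ n) f)"
  by (induction n) (auto intro: int_coeffs_deriv)

lemma int_coeffs_X_power: "int_coeffs (fps_X ^ k)"
  unfolding int_coeffs_def by simp

lemma int_coeffs_inverse:
  assumes "int_coeffs f" "f $ 0 = 1"
  shows "int_coeffs (inverse f)"
  unfolding int_coeffs_def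
proof
  fix n
  show "inverse f $ n \<in> \<int>"
  proof (induction n rule: less_induct)
    case (less n)
    show ?case
    proof (cases n)
      case 0
      then show ?thesis
        using assms(2) by simp
    next
      case (Suc k)
      then have "inverse f $ n = - (\<Sum>i=1..n. f $ i * inverse f $ (n - i))"
        unfolding fps_inverse_def using assms(2) by simp
      moreover have "(\<Sum>i=1..n. f $ i * inverse f $ (n - i)) \<in> \<int>"
        using assms(1) less Suc unfolding int_coeffs_def by (intro Ints_sum Ints_mult) auto
      ultimately show ?thesis
        by simp
    qed
  qed
qed

lemma fps_compose_X_power_nth:
  assumes "p > 0"
  shows "(f oo fps_X ^ p) $ n = (if p dvd n then f $ (n div p) else (0 :: 'a::comm_ring_1))"
proof -
  have "(f oo fps_X ^ p) $ n = (\<Sum>i=0..n. if i = n div p \<and> p dvd n then f $ i else 0)"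
    unfolding fps_compose_nth power_mult[symmetric] using assms
    by (intro sum.cong) (auto elim!: dvdE)
  then show ?thesis
    by (simp add: sum.delta' div_le_dividend)
qed

lemma int_coeffs_compose_X_power:
  "p > 0 \<Longrightarrow> int_coeffs f \<Longrightarrow> int_coeffs (f oo fps_X ^ p)"
  unfolding int_coeffs_def by (simp add: fps_compose_X_power_nth)

lemma fps_mult_compose_X_power_nth:
  assumes "p > 0"
  shows "(f * (g oo fps_X ^ p)) $ n = (\<Sum>j\<le>n div p. f $ (n - p * j) * (g $ j :: 'a::comm_ring_1))"
proof -
  have multiples: "{k \<in> {0..n}. p dvd k} = (\<lambda>j. p * j) ` {..n div p}"
    using assms by (auto simp: less_eq_div_iff_mult_less_eq mult.commute elim!: dvdE)
  have "(f * (g oo fps_X ^ p)) $ n = (\<Sum>k=0..n. f $ (n - k) * (g oo fps_X ^ p) $ k)"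
    unfolding fps_mult_nth by (subst sum.atLeastAtMost_rev) simp
  also have "\<dots> = (\<Sum>k \<in> {k \<in> {0..n}. p dvd k}. f $ (n - k) * g $ (k div p))"
    unfolding sum.inter_filter[OF finite_atLeastAtMost] fps_compose_X_power_nth[OF assms]
    by (intro sum.cong) auto
  also have "\<dots> = (\<Sum>j\<le>n div p. f $ (n - p * j) * g $ j)"
    unfolding multiples using assms by (subst sum.reindex) (auto simp: inj_on_def)
  finally show ?thesis .
qed

lemma fps_cong_diff_0: "fps_cong M f g \<longleftrightarrow> fps_cong M (f - g) 0"
  unfolding fps_cong_def by simp

lemma fps_cong_refl: "fps_cong M f f"
  unfolding fps_cong_def by (auto intro: exI[of _ 0])

lemma fps_cong_add:
  assumes "fps_cong M f g" "fps_cong M f' g'"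
  shows "fps_cong M (f + f') (g + g')"
  unfolding fps_cong_def
proof
  fix k
  obtain c c' where "(f - g) $ k = of_int (M * c)" "(f' - g') $ k = of_int (M * c')"
    using assms unfolding fps_cong_def by blast
  then have "(f + f' - (g + g')) $ k = of_int (M * (c + c'))"
    by (simp add: algebra_simps)
  then show "\<exists>c. (f + f' - (g + g')) $ k = of_int (M * c)" ..
qed

lemma fps_cong_trans: "fps_cong M f g \<Longrightarrow> fps_cong M g h \<Longrightarrow> fps_cong M f h"
  using fps_cong_add[of M f g g h] by (simp add: fps_cong_diff_0[of M f h] fps_cong_diff_0[of M "f + g"])

lemma fps_cong_mult_right:
  assumes "fps_cong M f g" "int_coeffs h"
  shows "fps_cong M (f * h) (g * h)"
proof -
  obtain c where c: "\<And>k. (f - g) $ k = of_int (M * c k)"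
    using assms(1) unfolding fps_cong_def by metis
  have "\<forall>k. \<exists>z. h $ k = of_int z"
    using assms(2) unfolding int_coeffs_def by (blast elim: Ints_cases)
  then obtain z where z: "\<And>k. h $ k = of_int (z k)"
    by metis
  have "(f * h - g * h) $ n = of_int (M * (\<Sum>i=0..n. c i * z (n - i)))" for n
    unfolding left_diff_distrib[symmetric] fps_mult_nth c z
    by (simp add: sum_distrib_left mult.assoc)
  then show ?thesis
    unfolding fps_cong_def by blast
qed

lemma fps_cong_deriv: "fps_cong M f g \<Longrightarrow> fps_cong M (fps_deriv f) (fps_deriv g)"
  unfolding fps_cong_def fps_deriv_sub[symmetric] fps_deriv_nth
  by (metis mult.left_commute of_int_mult of_int_of_nat_eq)

lemma fps_cong_compose_X_power:
  "p > 0 \<Longrightarrow> fps_cong M f g \<Longrightarrow> fps_cong M (f oo fps_X ^ p) (g oo fps_X ^ p)"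
  unfolding fps_cong_def fps_compose_sub_distrib[symmetric] fps_compose_X_power_nth
  by (metis mult_zero_right of_int_0)

lemma fps_cong_const_mult:
  "fps_cong M f 0 \<Longrightarrow> fps_cong (k * M) (fps_const (of_int k) * f) 0"
  unfolding fps_cong_def by (metis diff_zero fps_mult_left_const_nth mult.assoc of_int_mult)

lemma fps_cong_one: "int_coeffs f \<Longrightarrow> fps_cong 1 f 0"
  unfolding int_coeffs_def fps_cong_def by (auto elim!: Ints_cases)

lemma fps_cong_divide:
  assumes "int_coeffs g1" "int_coeffs g2" "g1 $ 0 = 1" "g2 $ 0 = 1"
    and "fps_cong M (f1 * g2) (f2 * g1)"
  shows "fps_cong M (f1 / g1) (f2 / g2)"
proof -
  have "f1 / g1 = f1 * g2 * (inverse g1 * inverse g2)" "f2 / g2 = f2 * g1 * (inverse g1 * inverse g2)"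
    using inverse_mult_eq_1'[of g1] inverse_mult_eq_1'[of g2] assms(3,4)
    by (simp_all add: fps_divide_unit ac_simps)
  moreover have "int_coeffs (inverse g1 * inverse g2)"
    using assms(1-4) by (intro int_coeffs_mult int_coeffs_inverse)
  ultimately show ?thesis
    using fps_cong_mult_right[OF assms(5)] by simp
qed

lemma fps_deriv_funpow_divide_cong:
  assumes "int_coeffs f" "int_coeffs g" "f $ 0 = 1" "g $ 0 = 1"
    and "fps_cong M (fps_deriv (f / g)) 0"
  shows "fps_cong M ((fps_deriv ^^ n) f / f) ((fps_deriv ^^ n) g / g)"
proof -
  define K where "K = f / g"
  have f_eq: "f = K * g"
    unfolding K_def using assms(4) by (simp add: fps_divide_unit mult.assoc inverse_mult_eq_1)
  have K_inverse: "K * inverse f = inverse g"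
    unfolding K_def using assms(3,4)
    by (simp add: fps_divide_unit fps_inverse_mult inverse_mult_eq_1' ac_simps)
  have deriv_cong: "fps_cong M ((fps_deriv ^^ k) f) (K * (fps_deriv ^^ k) g)" for k
  proof (induction k)
    case 0
    show ?case
      using f_eq fps_cong_refl by simp
  next
    case (Suc k)
    have "fps_cong M (fps_deriv K * (fps_deriv ^^ k) g) (0 * (fps_deriv ^^ k) g)"
      using assms(2,5) unfolding K_def by (intro fps_cong_mult_right int_coeffs_deriv_funpow)
    from fps_cong_add[OF this fps_cong_refl[of M "K * (fps_deriv ^^ Suc k) g"]]
    have "fps_cong M (fps_deriv (K * (fps_deriv ^^ k) g)) (K * (fps_deriv ^^ Suc k) g)"
      by (simp add: add.commute)
    then show ?case
      using fps_cong_trans[OF fps_cong_deriv[OF Suc.IH]] by simp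
  qed
  have "fps_cong M ((fps_deriv ^^ n) f * inverse f) (K * (fps_deriv ^^ n) g * inverse f)"
    using assms(1,3) by (intro fps_cong_mult_right deriv_cong int_coeffs_inverse)
  moreover have "K * (fps_deriv ^^ n) g * inverse f = (fps_deriv ^^ n) g * inverse g"
    using K_inverse by (metis mult.assoc mult.commute)
  ultimately show ?thesis
    using assms(3,4) by (simp add: fps_divide_unit)
qed

text \<open>The step congruence says \<open>f / g (t + 1) \<equiv> (f / g t)(X\<^sup>p)\<close> modulo \<open>p\<^sup>t\<^sup>+\<^sup>1\<close>, and
  differentiating a series in \<open>X\<^sup>p\<close> produces the missing factor \<open>p\<close>.\<close>

lemma fps_deriv_divide_cong:
  assumes "p > 0" "int_coeffs f" "f $ 0 = 1" "\<And>t. int_coeffs (g t)" "\<And>t. g t $ 0 = 1"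
    and step: "\<And>t. fps_cong (int p ^ Suc t) (f * (g t oo fps_X ^ p)) (g (Suc t) * (f oo fps_X ^ p))"
  shows "fps_cong (int p ^ t) (fps_deriv (f / g t)) 0"
proof (induction t)
  case 0
  have "int_coeffs (fps_deriv (f * inverse (g 0)))"
    using assms(2,4,5) by (intro int_coeffs_deriv int_coeffs_mult int_coeffs_inverse)
  then show ?case
    using assms(5) by (simp add: fps_cong_one fps_divide_unit)
next
  case (Suc t)
  have compose: "(f / g t) oo fps_X ^ p = (f oo fps_X ^ p) / (g t oo fps_X ^ p)"
    using assms(1,5) by (simp add: fps_divide_compose)
  have "fps_cong (int p ^ Suc t) (f / g (Suc t)) ((f / g t) oo fps_X ^ p)"
    unfolding compose using assms(1,4,5) step[of t]
    by (intro fps_cong_divide int_coeffs_compose_X_power) (simp_all add: ac_simps)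
  then have "fps_cong (int p ^ Suc t) (fps_deriv (f / g (Suc t))) (fps_deriv ((f / g t) oo fps_X ^ p))"
    by (rule fps_cong_deriv)
  moreover have "fps_cong (int p ^ Suc t)
    (fps_const (of_int (int p)) * (fps_deriv (f / g t) oo fps_X ^ p) * fps_X ^ (p - 1)) (0 * fps_X ^ (p - 1))"
    using fps_cong_const_mult[OF fps_cong_compose_X_power[OF assms(1) Suc.IH, unfolded fps_compose_0], of "int p"]
    by (intro fps_cong_mult_right int_coeffs_X_power) (simp add: ac_simps)
  moreover have "fps_deriv ((f / g t) oo fps_X ^ p)
    = fps_const (of_int (int p)) * (fps_deriv (f / g t) oo fps_X ^ p) * fps_X ^ (p - 1)"
    using assms(1) by (simp add: fps_compose_deriv fps_deriv_power ac_simps)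
  ultimately show ?case
    using fps_cong_trans by fastforce
qed

section \<open>Dwork's congruences for sequences with a digit factorisation\<close>

lemma sum_blocks:
  fixes X :: "nat \<Rightarrow> 'a::comm_monoid_add"
  shows "(\<Sum>j<n * p. X j) = (\<Sum>b<p. \<Sum>y<n. X (b + p * y))"
proof -
  have "(\<Sum>j<n * p. X j) = (\<Sum>y<n. \<Sum>j = 0 + y * p..<p + y * p. X j)"
    by (simp add: sum.nat_group[symmetric] add.commute)
  also have "\<dots> = (\<Sum>y<n. \<Sum>b<p. X (b + p * y))"
    unfolding sum.shift_bounds_nat_ivl by (simp add: atLeast0LessThan mult.commute)
  finally show ?thesis
    by (rule trans[OF _ sum.swap])
qed

lemma sum_sum_antisym:
  fixes E :: "'a \<Rightarrow> 'a \<Rightarrow> 'b::linordered_ab_group_add"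
  assumes "\<And>b c. E c b = - E b c"
  shows "(\<Sum>b\<in>I. \<Sum>c\<in>I. E b c) = 0"
proof -
  have "(\<Sum>b\<in>I. \<Sum>c\<in>I. E b c) = (\<Sum>c\<in>I. \<Sum>b\<in>I. E b c)"
    by (rule sum.swap)
  also have "\<dots> = (\<Sum>c\<in>I. \<Sum>b\<in>I. - E c b)"
    by (intro sum.cong refl) (rule assms)
  finally show ?thesis
    by (simp add: sum_negf)
qed

lemma sum_lessThan_atMost_swap:
  fixes m n :: nat
  shows "(\<Sum>j<m. if j \<le> n then h j else 0) = (\<Sum>j\<le>n. if j < m then h j else (0 :: 'b::comm_monoid_add))"
proof -
  have "(\<Sum>j<m. if j \<le> n then h j else 0) = sum h {j \<in> {..<m}. j \<le> n}"
    by (rule sum.inter_filter[symmetric]) simp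
  also have "{j \<in> {..<m}. j \<le> n} = {j \<in> {..n}. j < m}"
    by auto
  also have "sum h \<dots> = (\<Sum>j\<le>n. if j < m then h j else 0)"
    by (rule sum.inter_filter) simp
  finally show ?thesis .
qed

lemma digit_less_pow_Suc_iff:
  fixes p :: nat
  assumes "v < p"
  shows "v + p * i < p ^ Suc s \<longleftrightarrow> i < p ^ s"
proof
  assume "v + p * i < p ^ Suc s"
  then have "p * i < p * p ^ s"
    using power_Suc[of p s] by linarith
  then show "i < p ^ s"
    using mult_less_cancel1 by blast
next
  assume "i < p ^ s"
  then have "p * Suc i \<le> p * p ^ s"
    by (intro mult_le_mono2) simp
  then show "v + p * i < p ^ Suc s"
    using assms by simp
qed

text \<open>A variant of Dwork's criterion, in the form that \<open>A(m)\<close> satisfies for \<open>p \<in> {2,3}\<close>.\<close>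

locale digit_factorization =
  fixes p :: nat and a :: "nat \<Rightarrow> rat" and r :: "nat \<Rightarrow> nat \<Rightarrow> rat"
  assumes prime: "prime p"
    and a_Ints: "a n \<in> \<int>"
    and a_digit: "v < p \<Longrightarrow> a (v + p * x) = a x * r v x"
    and r_0: "p_contraction p (r 0)"
    and r_digit: "0 < v \<Longrightarrow> v < p \<Longrightarrow> p_contraction p (\<lambda>x. r v x / of_nat p)"
begin

lemma p_pos: "p > 0"
  using prime by (simp add: prime_gt_0_nat)

lemma r_contraction:
  assumes "v < p"
  shows "p_contraction p (r v)"
proof (cases "v = 0")
  case True
  then show ?thesis
    using r_0 by simp
next
  case False
  then show ?thesis
    using p_contraction_mult_p[OF p_pos r_digit[of v]] assms p_pos by simp
qed

definition conv :: "nat \<Rightarrow> nat \<Rightarrow> (nat \<Rightarrow> nat \<Rightarrow> rat) \<Rightarrow> rat" where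
  "conv s N \<phi> = (\<Sum>j<p ^ s. if j \<le> N then a (N - j) * a j * \<phi> (N - j) j else 0)"

definition skew_conv :: "nat \<Rightarrow> nat \<Rightarrow> (nat \<Rightarrow> nat \<Rightarrow> rat) \<Rightarrow> rat" where
  "skew_conv s N \<phi> = conv s N (\<lambda>x y. \<phi> x y - \<phi> y x)"

definition digit_twist :: "nat \<Rightarrow> nat \<Rightarrow> (nat \<Rightarrow> nat \<Rightarrow> rat) \<Rightarrow> nat \<Rightarrow> nat \<Rightarrow> rat" where
  "digit_twist c b \<phi> x y = r c x * r b y * \<phi> (c + p * x) (b + p * y)"

lemma conv_add: "conv s N (\<lambda>x y. \<phi> x y + \<psi> x y) = conv s N \<phi> + conv s N \<psi>"
  unfolding conv_def sum.distrib[symmetric] by (intro sum.cong) (auto simp: algebra_simps)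

lemma conv_minus: "conv s N (\<lambda>x y. - \<phi> x y) = - conv s N \<phi>"
  unfolding conv_def sum_negf[symmetric] by (intro sum.cong) auto

lemma conv_const_mult: "conv s N (\<lambda>x y. c * \<phi> x y) = c * conv s N \<phi>"
  unfolding conv_def sum_distrib_left by (intro sum.cong) (auto simp: algebra_simps)

lemma conv_digit_term:
  assumes "b < p" "c < p" "N = b + c + p * M"
  shows "(if b + p * y \<le> N then a (N - (b + p * y)) * a (b + p * y) * \<phi> (N - (b + p * y)) (b + p * y) else 0)
    = (if y \<le> M then a (M - y) * a y * digit_twist c b \<phi> (M - y) y else 0)"
proof (cases "y \<le> M")
  case True
  then have "p * y \<le> p * M"
    by (rule mult_le_mono2)
  then have "b + p * y \<le> N" "N - (b + p * y) = c + (p * M - p * y)"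
    using assms(3) by linarith+
  then show ?thesis
    using True a_digit[OF assms(2), of "M - y"] a_digit[OF assms(1), of y]
    unfolding digit_twist_def by (simp add: diff_mult_distrib2 ac_simps)
next
  case False
  then have "p * Suc M \<le> p * y"
    by (intro mult_le_mono2) simp
  then have "\<not> b + p * y \<le> N"
    using assms(2,3) by simp
  then show ?thesis
    using False by simp
qed

lemma conv_digit:
  assumes "b < p"
  shows "(\<Sum>y<p ^ s. if b + p * y \<le> N
      then a (N - (b + p * y)) * a (b + p * y) * \<phi> (N - (b + p * y)) (b + p * y) else 0)
    = (\<Sum>c<p. if b + c \<le> N \<and> p dvd N - b - c then conv s ((N - b - c) div p) (digit_twist c b \<phi>) else 0)"
proof (cases "b \<le> N")
  case False
  then show ?thesis
    by (auto intro!: sum.neutral)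
next
  case True
  define c0 M where "c0 = (N - b) mod p" and "M = (N - b) div p"
  have c0: "c0 < p"
    unfolding c0_def using p_pos by simp
  have N: "N = b + c0 + p * M"
    unfolding c0_def M_def using True by simp
  have carry: "b + c \<le> N \<and> p dvd N - b - c \<longleftrightarrow> c = c0" if "c < p" for c
  proof
    assume bc: "b + c \<le> N \<and> p dvd N - b - c"
    then obtain k where "N - b - c = p * k"
      by (meson dvdE)
    then have "N - b = c + p * k"
      using bc by simp
    then show "c = c0"
      unfolding c0_def using that by simp
  qed (use N in simp)
  have "N - b - c0 = p * M"
    using N by simp
  then have "(\<Sum>c<p. if b + c \<le> N \<and> p dvd N - b - c then conv s ((N - b - c) div p) (digit_twist c b \<phi>) else 0)
      = (\<Sum>c<p. if c = c0 then conv s M (digit_twist c b \<phi>) else 0)"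
    using carry p_pos by (intro sum.cong) auto
  also have "\<dots> = conv s M (digit_twist c0 b \<phi>)"
    using c0 by simp
  finally show ?thesis
    unfolding conv_def conv_digit_term[OF assms c0 N] ..
qed

lemma conv_Suc:
  "conv (Suc s) N \<phi> = (\<Sum>b<p. \<Sum>c<p.
     if b + c \<le> N \<and> p dvd N - b - c then conv s ((N - b - c) div p) (digit_twist c b \<phi>) else 0)"
proof -
  have "conv (Suc s) N \<phi> = (\<Sum>b<p. \<Sum>y<p ^ s. if b + p * y \<le> N
      then a (N - (b + p * y)) * a (b + p * y) * \<phi> (N - (b + p * y)) (b + p * y) else 0)"
    unfolding conv_def power_Suc2 by (rule sum_blocks)
  also have "\<dots> = (\<Sum>b<p. \<Sum>c<p.
     if b + c \<le> N \<and> p dvd N - b - c then conv s ((N - b - c) div p) (digit_twist c b \<phi>) else 0)"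
    by (intro sum.cong refl conv_digit) simp
  finally show ?thesis .
qed

text \<open>Expanding \<open>\<phi>(x, y) - \<phi>(y, x)\<close> digit by digit leaves, besides the terms
  of \<open>skew_conv\<close>, a remainder that is antisymmetric in the two digits \<open>b, c\<close> and cancels.\<close>

lemma skew_conv_Suc:
  "skew_conv (Suc s) N \<phi> = (\<Sum>b<p. \<Sum>c<p.
     if b + c \<le> N \<and> p dvd N - b - c then skew_conv s ((N - b - c) div p) (digit_twist c b \<phi>) else 0)"
proof -
  define E where "E b c = (if b + c \<le> N \<and> p dvd N - b - c
    then conv s ((N - b - c) div p) (\<lambda>x y. digit_twist c b \<phi> y x - digit_twist b c \<phi> y x) else 0)" for b c
  have twist: "digit_twist c b (\<lambda>x y. \<phi> x y - \<phi> y x) x y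
    = (digit_twist c b \<phi> x y - digit_twist c b \<phi> y x) + (digit_twist c b \<phi> y x - digit_twist b c \<phi> y x)"
    for b c x y
    unfolding digit_twist_def by (simp add: algebra_simps)
  have "skew_conv (Suc s) N \<phi> = (\<Sum>b<p. \<Sum>c<p. (if b + c \<le> N \<and> p dvd N - b - c
      then skew_conv s ((N - b - c) div p) (digit_twist c b \<phi>) else 0) + E b c)"
    unfolding skew_conv_def conv_Suc twist conv_add E_def by (intro sum.cong refl) simp
  also have "\<dots> = (\<Sum>b<p. \<Sum>c<p. if b + c \<le> N \<and> p dvd N - b - c
      then skew_conv s ((N - b - c) div p) (digit_twist c b \<phi>) else 0) + (\<Sum>b<p. \<Sum>c<p. E b c)"
    by (simp add: sum.distrib)
  also have "(\<Sum>b<p. \<Sum>c<p. E b c) = 0"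
  proof (rule sum_sum_antisym)
    fix b c
    have "conv s M (\<lambda>x y. digit_twist b c \<phi> y x - digit_twist c b \<phi> y x)
      = - conv s M (\<lambda>x y. digit_twist c b \<phi> y x - digit_twist b c \<phi> y x)" for M
      using conv_minus[of s M "\<lambda>x y. digit_twist c b \<phi> y x - digit_twist b c \<phi> y x"] by simp
    then show "E c b = - E b c"
      unfolding E_def by (simp add: ac_simps)
  qed
  finally show ?thesis
    by simp
qed

lemma skew_conv_split:
  assumes "\<And>x y. \<psi> x y = \<chi>\<^sub>1 x y + c * \<chi>\<^sub>2 x y" "\<And>x y. \<chi>\<^sub>1 x y = \<chi>\<^sub>1 y x"
  shows "skew_conv s N \<psi> = c * skew_conv s N \<chi>\<^sub>2"
proof -
  have "\<psi> x y - \<psi> y x = c * (\<chi>\<^sub>2 x y - \<chi>\<^sub>2 y x)" for x y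
    using assms(1)[of x y] assms(1)[of y x] assms(2)[of x y] by (simp add: algebra_simps)
  then show ?thesis
    unfolding skew_conv_def conv_const_mult[symmetric] by simp
qed

text \<open>A nonzero digit supplies the factor \<open>p\<close> through \<open>r_digit\<close>; for two zero digits it
  comes from \<open>\<phi>\<close> being a contraction at \<open>(0, 0)\<close>.\<close>

lemma digit_twist_decomposition:
  assumes "p_contraction2 p \<phi>" "b < p" "c < p"
  obtains \<chi>\<^sub>1 \<chi>\<^sub>2 where "\<And>x y. \<chi>\<^sub>1 x y = \<chi>\<^sub>1 y x" "p_contraction2 p \<chi>\<^sub>2"
    "\<And>x y. digit_twist c b \<phi> x y = \<chi>\<^sub>1 x y + of_nat p * \<chi>\<^sub>2 x y"
proof -
  have digits: "p_contraction2 p (\<lambda>x y. \<phi> (c + p * x) (b + p * y))"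
    by (rule p_contraction2_digits[OF p_pos assms(1)])
  consider "0 < c" | "c = 0" "0 < b" | "c = 0" "b = 0"
    by blast
  then show ?thesis
  proof cases
    case 1
    have "p_contraction2 p (\<lambda>x y. r c x / of_nat p * r b y * \<phi> (c + p * x) (b + p * y))"
      using p_contraction2_fst[OF r_digit[OF 1 assms(3)]] p_contraction2_snd[OF r_contraction[OF assms(2)]]
      by (intro p_contraction2_mult digits)
    then show ?thesis
      by (rule that[of "\<lambda>x y. 0", rotated]) (use p_pos in \<open>simp_all add: digit_twist_def\<close>)
  next
    case 2
    have "p_contraction2 p (\<lambda>x y. r c x * (r b y / of_nat p) * \<phi> (c + p * x) (b + p * y))"
      using p_contraction2_fst[OF r_contraction[OF assms(3)]] p_contraction2_snd[OF r_digit[OF 2(2) assms(2)]]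
      by (intro p_contraction2_mult digits)
    then show ?thesis
      by (rule that[of "\<lambda>x y. 0", rotated]) (use p_pos in \<open>simp_all add: digit_twist_def\<close>)
  next
    case 3
    have "p_contraction2 p (\<lambda>x y. r 0 x * r 0 y * ((\<phi> (p * x) (p * y) - \<phi> 0 0) / of_nat p))"
      using p_contraction2_fst[OF r_0] p_contraction2_snd[OF r_0]
      by (intro p_contraction2_mult p_contraction2_divide_p[OF p_pos assms(1)])
    moreover have "digit_twist c b \<phi> x y
      = \<phi> 0 0 * (r 0 x * r 0 y) + of_nat p * (r 0 x * r 0 y * ((\<phi> (p * x) (p * y) - \<phi> 0 0) / of_nat p))"
      for x y
      unfolding digit_twist_def 3 using p_pos by (simp add: field_simps)
    ultimately show ?thesis
      by (intro that[of "\<lambda>x y. \<phi> 0 0 * (r 0 x * r 0 y)"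
            "\<lambda>x y. r 0 x * r 0 y * ((\<phi> (p * x) (p * y) - \<phi> 0 0) / of_nat p)"]) simp_all
  qed
qed

theorem skew_conv_cong:
  assumes "p_contraction2 p \<phi>"
  shows "p_pow_dvd p (Suc s) (skew_conv s N \<phi>)"
  using assms
proof (induction s arbitrary: N \<phi>)
  case 0
  have "p_pow_dvd p (Suc 0)
      ((\<phi> (0 + N * p ^ 0) (0 + 0 * p ^ 0) - \<phi> 0 0) - (\<phi> (0 + 0 * p ^ 0) (0 + N * p ^ 0) - \<phi> 0 0))"
    using p_contraction2_shift[OF 0, where t = 0 and x = 0 and a = N and y = 0 and b = 0]
      p_contraction2_shift[OF 0, where t = 0 and x = 0 and a = 0 and y = 0 and b = N]
    by (rule p_pow_dvd_diff)
  then have "p_pow_dvd p (Suc 0) (a N * a 0 * (\<phi> N 0 - \<phi> 0 N))"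
    using a_Ints by (intro p_pow_dvd_mult_left p_integral_mult p_integral_Ints) simp_all
  then show ?case
    unfolding skew_conv_def conv_def by simp
next
  case (Suc s)
  have "p_pow_dvd p (Suc (Suc s)) (skew_conv s M (digit_twist c b \<phi>))"
    if bc: "b < p" "c < p" for b c M
  proof -
    obtain \<chi>\<^sub>1 \<chi>\<^sub>2 where \<chi>: "\<And>x y. \<chi>\<^sub>1 x y = \<chi>\<^sub>1 y x" "p_contraction2 p \<chi>\<^sub>2"
      "\<And>x y. digit_twist c b \<phi> x y = \<chi>\<^sub>1 x y + of_nat p * \<chi>\<^sub>2 x y"
      by (rule digit_twist_decomposition[OF Suc.prems bc]) (rule that)
    show ?thesis
      unfolding skew_conv_split[OF \<chi>(3,1)] by (intro p_pow_dvd_mult_p p_pos Suc.IH \<chi>(2))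
  qed
  then show ?case
    unfolding skew_conv_Suc by (intro p_pow_dvd_sum) auto
qed

lemma fps_cutoff_cross_nth:
  "(Abs_fps a * (fps_cutoff (p ^ s) (Abs_fps a) oo fps_X ^ p)
      - fps_cutoff (p ^ Suc s) (Abs_fps a) * (Abs_fps a oo fps_X ^ p)) $ n
    = skew_conv s (n div p) (\<lambda>x y. r (n mod p) x)"
proof -
  define v K where "v = n mod p" and "K = n div p"
  have v: "v < p"
    unfolding v_def using p_pos by simp
  have n: "n - p * j = v + p * (K - j)" if "j \<le> K" for j
  proof -
    have "n = v + p * K" "p * j \<le> p * K"
      using that unfolding v_def K_def by simp_all
    then show ?thesis
      by (simp add: diff_mult_distrib2)
  qed
  have "(Abs_fps a * (fps_cutoff (p ^ s) (Abs_fps a) oo fps_X ^ p)) $ n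
      = (\<Sum>j\<le>K. if j < p ^ s then a (v + p * (K - j)) * a j else 0)"
    unfolding fps_mult_compose_X_power_nth[OF p_pos] K_def[symmetric] by (intro sum.cong) (auto simp: n)
  moreover have "(fps_cutoff (p ^ Suc s) (Abs_fps a) * (Abs_fps a oo fps_X ^ p)) $ n
      = (\<Sum>j\<le>K. if j < p ^ s then a (v + p * j) * a (K - j) else 0)"
  proof -
    have "(fps_cutoff (p ^ Suc s) (Abs_fps a) * (Abs_fps a oo fps_X ^ p)) $ n
        = (\<Sum>j\<le>K. if v + p * (K - j) < p ^ Suc s then a (v + p * (K - j)) * a j else 0)"
      unfolding fps_mult_compose_X_power_nth[OF p_pos] K_def[symmetric] by (intro sum.cong) (auto simp: n)
    also have "\<dots> = (\<Sum>j\<le>K. if v + p * j < p ^ Suc s then a (v + p * j) * a (K - j) else 0)"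
      unfolding atLeast0AtMost[symmetric] by (subst sum.atLeastAtMost_rev) (intro sum.cong; simp)
    finally show ?thesis
      unfolding digit_less_pow_Suc_iff[OF v] .
  qed
  moreover have "skew_conv s K (\<lambda>x y. r v x)
      = (\<Sum>j\<le>K. (if j < p ^ s then a (v + p * (K - j)) * a j else 0)
          - (if j < p ^ s then a (v + p * j) * a (K - j) else 0))"
    unfolding skew_conv_def conv_def sum_lessThan_atMost_swap
  proof (intro sum.cong refl)
    fix j
    have "a (v + p * (K - j)) = a (K - j) * r v (K - j)" "a (v + p * j) = a j * r v j"
      by (rule a_digit[OF v])+
    then show "(if j < p ^ s then a (K - j) * a j * (r v (K - j) - r v j) else 0)
      = (if j < p ^ s then a (v + p * (K - j)) * a j else 0)
        - (if j < p ^ s then a (v + p * j) * a (K - j) else 0)"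
      by (simp add: algebra_simps)
  qed
  ultimately show ?thesis
    unfolding v_def K_def by (simp add: sum_subtractf)
qed

lemma fps_cutoff_cong:
  "fps_cong (int p ^ Suc s) (Abs_fps a * (fps_cutoff (p ^ s) (Abs_fps a) oo fps_X ^ p))
     (fps_cutoff (p ^ Suc s) (Abs_fps a) * (Abs_fps a oo fps_X ^ p))"
proof -
  define D where "D = Abs_fps a * (fps_cutoff (p ^ s) (Abs_fps a) oo fps_X ^ p)
    - fps_cutoff (p ^ Suc s) (Abs_fps a) * (Abs_fps a oo fps_X ^ p)"
  have "int_coeffs (fps_cutoff N (Abs_fps a))" for N
    using a_Ints by (simp add: int_coeffs_def)
  then have "int_coeffs D"
    unfolding D_def using a_Ints p_pos
    by (intro int_coeffs_diff int_coeffs_mult int_coeffs_compose_X_power) (simp_all add: int_coeffs_def)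
  have "\<exists>c. D $ n = of_int (int p ^ Suc s * c)" for n
  proof -
    obtain z where z: "D $ n = of_int z"
      using \<open>int_coeffs D\<close> unfolding int_coeffs_def by (blast elim: Ints_cases)
    have "p_pow_dvd p (Suc s) (skew_conv s (n div p) (\<lambda>x y. r (n mod p) x))"
      using p_pos by (intro skew_conv_cong p_contraction2_fst r_contraction) simp
    then have "int p ^ Suc s dvd z"
      using z fps_cutoff_cross_nth p_pow_dvd_of_int_iff[OF p_pos] unfolding D_def by simp
    then show ?thesis
      using z by (auto elim!: dvdE)
  qed
  then show ?thesis
    unfolding fps_cong_def D_def by blast
qed

end

section \<open>The coefficients \<open>A(m)\<close>\<close>

fun coprime_fact :: "nat \<Rightarrow> nat \<Rightarrow> nat" where
  "coprime_fact p 0 = 1"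
| "coprime_fact p (Suc n) = coprime_fact p n * (if p dvd Suc n then 1 else Suc n)"

lemma coprime_fact_pos: "coprime_fact p n > 0"
  by (induction n) auto

lemma coprime_fact_coprime: "prime p \<Longrightarrow> coprime (coprime_fact p n) p"
  by (induction n) (auto simp: coprime_commute prime_imp_coprime)

lemma fact_eq_coprime_fact:
  assumes "p > 0"
  shows "(fact n :: nat) = p ^ (n div p) * fact (n div p) * coprime_fact p n"
proof (induction n)
  case 0
  then show ?case
    by simp
next
  case (Suc n)
  show ?case
  proof (cases "p dvd Suc n")
    case True
    then have d: "Suc n div p = Suc (n div p)"
      by (simp add: div_Suc)
    then have e: "Suc n = p * Suc (n div p)"
      using True by (metis dvd_mult_div_cancel)
    have "(fact (Suc n) :: nat) = Suc n * (p ^ (n div p) * fact (n div p) * coprime_fact p n)"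
      using Suc by simp
    also have "\<dots> = p ^ Suc (n div p) * fact (Suc (n div p)) * coprime_fact p (Suc n)"
      using True by (subst e) (simp add: algebra_simps)
    finally show ?thesis
      unfolding d .
  next
    case False
    then have "Suc n div p = n div p"
      by (simp add: div_Suc dvd_eq_mod_eq_0)
    then show ?thesis
      using Suc False by (simp add: algebra_simps)
  qed
qed

lemma coprime_fact_add_pow_cong:
  assumes "p > 0"
  shows "[coprime_fact p (n + p ^ t) = coprime_fact p n * coprime_fact p (p ^ t)] (mod p ^ t)"
proof (induction n)
  case 0
  then show ?case
    by simp
next
  case (Suc n)
  have step: "[(if p dvd Suc n + p ^ t then 1 else Suc n + p ^ t) = (if p dvd Suc n then 1 else Suc n)] (mod p ^ t)"
  proof (cases "t = 0")
    case False
    then have "p dvd Suc n + p ^ t \<longleftrightarrow> p dvd Suc n"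
      using dvd_add_left_iff[of p "p ^ t" "Suc n"] by simp
    moreover have "[Suc n + p ^ t = Suc n] (mod p ^ t)"
      unfolding cong_def by (rule mod_add_self2)
    ultimately show ?thesis
      by simp
  qed (simp add: cong_def)
  have eqs: "coprime_fact p (Suc n + p ^ t)
      = coprime_fact p (n + p ^ t) * (if p dvd Suc n + p ^ t then 1 else Suc n + p ^ t)"
    "coprime_fact p (Suc n) * coprime_fact p (p ^ t)
      = coprime_fact p n * coprime_fact p (p ^ t) * (if p dvd Suc n then 1 else Suc n)"
    by simp_all
  show ?case
    unfolding eqs using cong_mult[OF Suc.IH step] by (simp only: ac_simps)
qed

lemma coprime_fact_add_mult_pow_cong:
  assumes "p > 0"
  shows "[coprime_fact p (n + L * p ^ t) = coprime_fact p n * coprime_fact p (p ^ t) ^ L] (mod p ^ t)"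
proof (induction L)
  case 0
  then show ?case
    by simp
next
  case (Suc L)
  have "[coprime_fact p ((n + L * p ^ t) + p ^ t) = coprime_fact p (n + L * p ^ t) * coprime_fact p (p ^ t)] (mod p ^ t)"
    by (rule coprime_fact_add_pow_cong[OF assms])
  also have "[coprime_fact p (n + L * p ^ t) * coprime_fact p (p ^ t)
      = coprime_fact p n * coprime_fact p (p ^ t) ^ L * coprime_fact p (p ^ t)] (mod p ^ t)"
    by (intro cong_scalar_right Suc.IH)
  finally show ?case
    by (simp add: algebra_simps)
qed

definition A_unit :: "nat \<Rightarrow> nat \<Rightarrow> rat" where
  "A_unit p n = of_nat (coprime_fact p (6 * n))
     / of_nat (coprime_fact p (3 * n) * coprime_fact p (2 * n) * coprime_fact p n)"

lemma A_unit_cong: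
  assumes "prime p"
  shows "p_pow_dvd p t (A_unit p (n + a * p ^ t) - A_unit p n)"
proof -
  have p: "p > 0"
    using assms by (simp add: prime_gt_0_nat)
  define cf E where "cf = coprime_fact p" and "E = coprime_fact p (p ^ t)"
  define n' where "n' = n + a * p ^ t"
  have shift: "[cf (c * n') = cf (c * n) * E ^ (c * a)] (mod p ^ t)" for c
  proof -
    have "c * n' = c * n + (c * a) * p ^ t"
      unfolding n'_def by (simp add: algebra_simps)
    then show ?thesis
      unfolding cf_def E_def using coprime_fact_add_mult_pow_cong[OF p] by simp
  qed
  have E6: "E ^ (6 * a) = E ^ (3 * a) * E ^ (2 * a) * E ^ (1 * a)"
    by (simp flip: power_add)
  have "[cf (6 * n') * (cf (3 * n) * cf (2 * n) * cf n)
      = cf (6 * n) * E ^ (6 * a) * (cf (3 * n) * cf (2 * n) * cf n)] (mod p ^ t)"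
    by (rule cong_scalar_right[OF shift[of 6]])
  also have "cf (6 * n) * E ^ (6 * a) * (cf (3 * n) * cf (2 * n) * cf n)
      = cf (6 * n) * ((cf (3 * n) * E ^ (3 * a)) * (cf (2 * n) * E ^ (2 * a)) * (cf (1 * n) * E ^ (1 * a)))"
    unfolding E6 by (simp add: ac_simps)
  also have "[\<dots> = cf (6 * n) * (cf (3 * n') * cf (2 * n') * cf (1 * n'))] (mod p ^ t)"
    by (intro cong_scalar_left cong_mult cong_sym[OF shift])
  finally have "[cf (6 * n') * (cf (3 * n) * cf (2 * n) * cf n)
      = cf (6 * n) * (cf (3 * n') * cf (2 * n') * cf n')] (mod p ^ t)"
    by simp
  then show ?thesis
    unfolding A_unit_def n'_def[symmetric] cf_def
    using coprime_fact_coprime[OF assms] coprime_fact_pos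
    by (intro p_pow_dvd_frac_diff) (simp_all add: coprime_fact_pos)
qed

lemma A_unit_contraction:
  assumes "prime p"
  shows "p_contraction p (\<lambda>x. A_unit p (v + p * x))"
proof (rule p_contractionI)
  show "p_integral p (A_unit p (v + p * x))" for x
    unfolding A_unit_def using coprime_fact_coprime[OF assms] coprime_fact_pos
    by (intro p_integral_divide_nat) simp_all
  show "p_pow_dvd p (Suc t) (A_unit p (v + p * (x + a * p ^ t)) - A_unit p (v + p * x))" for t a x
    using A_unit_cong[OF assms, of "Suc t" "v + p * x" a] by (simp add: algebra_simps)
qed

lemma A_eq_fact_ratio: "(of_nat (A n) :: rat) = fact (6 * n) / (fact (3 * n) * fact (2 * n) * fact n)"
proof -
  have "fact (2 * n) * fact n dvd (fact (3 * n) :: nat)"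
    using fact_fact_dvd_fact[of "2 * n" n] by simp
  then have "fact (3 * n) * (fact (2 * n) * fact n) dvd (fact (3 * n) * fact (3 * n) :: nat)"
    by (rule mult_dvd_mono[OF dvd_refl])
  also have "\<dots> dvd fact (6 * n)"
    using fact_fact_dvd_fact[of "3 * n" "3 * n"] by simp
  finally have "fact (3 * n) * fact (2 * n) * fact n dvd (fact (6 * n) :: nat)"
    by (simp add: mult.assoc)
  then obtain k where k: "(fact (6 * n) :: nat) = fact (3 * n) * fact (2 * n) * fact n * k"
    by (elim dvdE)
  then have "A n = k"
    unfolding A_def by simp
  then show ?thesis
    using arg_cong[OF k, of "of_nat :: nat \<Rightarrow> rat"] by simp
qed

lemma fact_add_eq_pochhammer: "(fact (n + k) :: 'a::{semiring_char_0,comm_semiring_1}) = fact n * pochhammer (of_nat n + 1) k"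
  unfolding pochhammer_fact pochhammer_product' by (simp add: add.commute)

definition digit_factor :: "nat \<Rightarrow> nat \<Rightarrow> nat \<Rightarrow> nat \<Rightarrow> rat" where
  "digit_factor p c v x = of_nat p ^ (c * v div p) * pochhammer (of_nat (c * x) + 1) (c * v div p)"

lemma fact_digit:
  assumes "p > 0"
  shows "(fact (c * (v + p * x)) :: rat)
    = of_nat p ^ (c * x) * fact (c * x) * digit_factor p c v x * of_nat (coprime_fact p (c * (v + p * x)))"
proof -
  have "c * (v + p * x) = c * v + (c * x) * p"
    by (simp add: algebra_simps)
  then have "c * (v + p * x) div p = c * x + c * v div p"
    using assms by simp
  then have "(fact (c * (v + p * x)) :: rat)
    = of_nat p ^ (c * x + c * v div p) * fact (c * x + c * v div p) * of_nat (coprime_fact p (c * (v + p * x)))"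
    using arg_cong[OF fact_eq_coprime_fact[OF assms, of "c * (v + p * x)"], of "of_nat :: nat \<Rightarrow> rat"]
    by (simp only: of_nat_mult of_nat_power of_nat_fact)
  then show ?thesis
    unfolding digit_factor_def fact_add_eq_pochhammer by (simp add: power_add ac_simps)
qed

definition A_digit_ratio :: "nat \<Rightarrow> nat \<Rightarrow> nat \<Rightarrow> rat" where
  "A_digit_ratio p v x = digit_factor p 6 v x / (digit_factor p 3 v x * digit_factor p 2 v x * digit_factor p 1 v x)
     * A_unit p (v + p * x)"

lemma A_digit:
  assumes "p > 0"
  shows "(of_nat (A (v + p * x)) :: rat) = of_nat (A x) * A_digit_ratio p v x"
proof -
  define P D C where "P c = (of_nat p ^ (c * x) :: rat)" and "D c = digit_factor p c v x"
    and "C c = (of_nat (coprime_fact p (c * (v + p * x))) :: rat)" for c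
  have "(of_nat (A (v + p * x)) :: rat) = fact (6 * (v + p * x)) / (fact (3 * (v + p * x))
      * fact (2 * (v + p * x)) * fact (1 * (v + p * x)))"
    unfolding A_eq_fact_ratio by simp
  also have "\<dots> = (P 6 * fact (6 * x) * D 6 * C 6) / ((P 3 * fact (3 * x) * D 3 * C 3)
      * (P 2 * fact (2 * x) * D 2 * C 2) * (P 1 * fact (1 * x) * D 1 * C 1))"
    unfolding P_def D_def C_def fact_digit[OF assms] ..
  also have "\<dots> = (P 6 / (P 3 * P 2 * P 1)) * (fact (6 * x) / (fact (3 * x) * fact (2 * x) * fact (1 * x)))
      * (D 6 / (D 3 * D 2 * D 1)) * (C 6 / (C 3 * C 2 * C 1))"
    by (simp add: divide_inverse inverse_mult_distrib mult_ac)
  also have "P 6 / (P 3 * P 2 * P 1) = 1"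
    unfolding P_def using assms by (simp flip: power_add)
  finally show ?thesis
    unfolding A_digit_ratio_def A_unit_def A_eq_fact_ratio D_def C_def by simp
qed

lemma A_digit_ratio_0: "p > 0 \<Longrightarrow> A_digit_ratio p 0 x = A_unit p (p * x)"
  by (simp add: A_digit_ratio_def digit_factor_def)

lemma digit_factor_nonzero:
  assumes "p > 0"
  shows "digit_factor p c v x \<noteq> 0"
proof -
  have "0 < pochhammer (of_nat (c * x) + 1 :: rat) (c * v div p)"
    using of_nat_0_le_iff[of "c * x", where 'a = rat] by (intro pochhammer_pos) linarith
  then show ?thesis
    unfolding digit_factor_def using assms by simp
qed

lemma A_digit_ratio_linear:
  assumes "p \<in> {2, 3}" "0 < v" "v < p"
  obtains k :: nat where
    "\<And>x. A_digit_ratio p v x = of_nat p * (of_nat k * (6 * of_nat x + 1)) * A_unit p (v + p * x)"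
proof -
  have poch: "pochhammer z 2 = z * (z + 1)" "pochhammer z 3 = z * (z + 1) * (z + 2)"
    "pochhammer z 4 = z * (z + 1) * (z + 2) * (z + 3)" for z :: rat
    by (simp_all add: pochhammer_Suc numeral_eq_Suc algebra_simps)
  have "\<exists>k::nat. \<forall>x. digit_factor p 6 v x = of_nat p * (of_nat k * (6 * of_nat x + 1))
      * (digit_factor p 3 v x * digit_factor p 2 v x * digit_factor p 1 v x)"
  proof -
    consider "p = 2" "v = 1" | "p = 3" "v = 1" | "p = 3" "v = 2"
      using assms by force
    then show ?thesis
    proof cases
      case 1
      then show ?thesis
        by (intro exI[of _ 6]) (simp add: digit_factor_def poch pochhammer_Suc algebra_simps)
    next
      case 2
      then show ?thesis
        by (intro exI[of _ 2]) (simp add: digit_factor_def poch pochhammer_Suc algebra_simps)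
    next
      case 3
      then show ?thesis
        by (intro exI[of _ 12]) (simp add: digit_factor_def poch pochhammer_Suc algebra_simps)
    qed
  qed
  then obtain k :: nat where k: "\<And>x. digit_factor p 6 v x = of_nat p * (of_nat k * (6 * of_nat x + 1))
      * (digit_factor p 3 v x * digit_factor p 2 v x * digit_factor p 1 v x)"
    by blast
  have "p > 0"
    using assms(1) by auto
  then show ?thesis
    by (intro that[of k]) (simp add: A_digit_ratio_def k digit_factor_nonzero)
qed

lemma digit_factorization_A:
  assumes "p \<in> {2, 3}"
  shows "digit_factorization p (\<lambda>n. of_nat (A n)) (A_digit_ratio p)"
proof unfold_locales
  have p: "prime p" "p > 0"
    using assms by auto
  show "prime p"
    by (rule p(1))
  show "of_nat (A n) \<in> \<int>" for n
    by simp
  show "of_nat (A (v + p * x)) = of_nat (A x) * A_digit_ratio p v x" for v x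
    by (rule A_digit[OF p(2)])
  have "A_digit_ratio p 0 = (\<lambda>x. A_unit p (p * x))"
    by (rule ext) (rule A_digit_ratio_0[OF p(2)])
  then show "p_contraction p (A_digit_ratio p 0)"
    using A_unit_contraction[OF p(1), of 0] by simp
  show "p_contraction p (\<lambda>x. A_digit_ratio p v x / of_nat p)" if v: "0 < v" "v < p" for v
  proof -
    obtain k :: nat where k:
      "\<And>x. A_digit_ratio p v x = of_nat p * (of_nat k * (6 * of_nat x + 1)) * A_unit p (v + p * x)"
      using A_digit_ratio_linear[OF assms v] by blast
    have "(\<lambda>x. A_digit_ratio p v x / of_nat p) = (\<lambda>x. of_nat k * (6 * of_nat x + 1) * A_unit p (v + p * x))"
      using p(2) by (simp add: k mult.assoc)
    moreover have "p_contraction p (\<lambda>x. of_nat k * (6 * of_nat x + 1) * A_unit p (v + p * x))"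
      using assms by (intro p_contraction_mult p_contraction_linear A_unit_contraction p(1)) auto
    ultimately show ?thesis
      by simp
  qed
qed

lemma A_0: "A 0 = 1"
  unfolding A_def by simp

lemma A_Suc: "(m + 1) ^ 2 * A (Suc m) = 12 * (6 * m + 1) * (6 * m + 5) * A m"
proof -
  define P where "P c = pochhammer (of_nat (c * m) + 1 :: rat) c" for c
  have fact_Suc: "fact (c * Suc m) = (fact (c * m) :: rat) * P c" for c
    unfolding P_def fact_add_eq_pochhammer[symmetric] by (simp add: algebra_simps)
  have P_pos: "P c > 0" for c
    unfolding P_def using of_nat_0_le_iff[of "c * m", where 'a = rat] by (intro pochhammer_pos) linarith
  then have P_nz: "P c \<noteq> 0" for c
    using less_irrefl by metis
  have "(of_nat (A (Suc m)) :: rat) = fact (6 * Suc m) / (fact (3 * Suc m) * fact (2 * Suc m) * fact (1 * Suc m))"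
    unfolding A_eq_fact_ratio by simp
  also have "\<dots> = of_nat (A m) * (P 6 / (P 3 * P 2 * P 1))"
    unfolding fact_Suc A_eq_fact_ratio by (simp add: divide_inverse inverse_mult_distrib mult_ac)
  finally have step: "(of_nat (A (Suc m)) :: rat) * (P 3 * P 2 * P 1) = of_nat (A m) * P 6"
    using P_nz by (simp add: field_simps)
  have poly: "P 6 * (of_nat m + 1) ^ 2 = 12 * (6 * of_nat m + 1) * (6 * of_nat m + 5) * (P 3 * P 2 * P 1)"
    unfolding P_def by (simp add: pochhammer_Suc numeral_eq_Suc power2_eq_square algebra_simps)
  have "of_nat ((m + 1) ^ 2 * A (Suc m)) * (P 3 * P 2 * P 1)
      = (of_nat (A (Suc m)) * (P 3 * P 2 * P 1)) * (of_nat m + 1) ^ 2"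
    by (simp add: ac_simps)
  also have "\<dots> = of_nat (A m) * (P 6 * (of_nat m + 1) ^ 2)"
    unfolding step by (simp only: mult.assoc)
  also have "\<dots> = of_nat (12 * (6 * m + 1) * (6 * m + 5) * A m) * (P 3 * P 2 * P 1)"
    unfolding poly by (simp add: ac_simps)
  finally show ?thesis
    using P_nz by (simp only: mult_cancel_right of_nat_eq_iff) simp
qed

lemma F_nth: "F $ m = of_nat (A m)"
proof (induction m)
  case 0
  show ?case
    unfolding F_def fps_scale_def hyp2F1_def A_0 by simp
next
  case (Suc m)
  have "F $ Suc m = F $ m * (432 * (1 / 6 + of_nat m) * (5 / 6 + of_nat m) / (of_nat m + 1) ^ 2)"
    unfolding F_def fps_scale_def hyp2F1_def by (simp add: pochhammer_Suc power2_eq_square field_simps)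
  also have "\<dots> = of_nat (12 * (6 * m + 1) * (6 * m + 5) * A m) / (of_nat m + 1) ^ 2"
    unfolding Suc.IH by (simp add: algebra_simps)
  also have "\<dots> = of_nat (A (Suc m))"
  proof -
    have "(of_nat m + 1 :: rat) \<noteq> 0"
      by (metis of_nat_Suc of_nat_neq_0 add.commute)
    then show ?thesis
      unfolding A_Suc[symmetric] by (simp add: add.commute)
  qed
  finally show ?case .
qed

theorem lemma3p6:
  fixes p s n :: nat
  assumes "p \<in> {2, 3}"
  shows "fps_cong (int p ^ (s+1))
           (F / fps_compose F (fps_X ^ p))
           (Ftr p (s+1) / fps_compose (Ftr p s) (fps_X ^ p))
       \<and> fps_cong (int p ^ (s+1))
           ((fps_deriv ^^ n) F / F)
           ((fps_deriv ^^ n) (Ftr p (s+1)) / Ftr p (s+1))"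
proof -
  interpret digit_factorization p "\<lambda>n. of_nat (A n)" "A_digit_ratio p"
    by (rule digit_factorization_A[OF assms])
  have F: "F = Abs_fps (\<lambda>n. of_nat (A n))"
    by (rule fps_ext) (simp add: F_nth)
  have Ftr: "Ftr p t = fps_cutoff (p ^ t) F" for t
    by (rule fps_ext) (simp add: Ftr_def F)
  have ints: "int_coeffs F" "int_coeffs (Ftr p t)" for t
    unfolding int_coeffs_def Ftr F by simp_all
  have const: "F $ 0 = 1" "Ftr p t $ 0 = 1" for t
    unfolding Ftr F using p_pos by (simp_all add: A_0)
  have cong: "fps_cong (int p ^ Suc t) (F * (Ftr p t oo fps_X ^ p)) (Ftr p (Suc t) * (F oo fps_X ^ p))" for t
    unfolding Ftr F by (rule fps_cutoff_cong)
  have "fps_cong (int p ^ (s + 1)) (F / (F oo fps_X ^ p)) (Ftr p (s + 1) / (Ftr p s oo fps_X ^ p))"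
    using ints const p_pos cong[of s] by (intro fps_cong_divide int_coeffs_compose_X_power) simp_all
  moreover have "fps_cong (int p ^ (s + 1)) ((fps_deriv ^^ n) F / F) ((fps_deriv ^^ n) (Ftr p (s + 1)) / Ftr p (s + 1))"
    using fps_deriv_divide_cong[OF p_pos ints(1) const(1) ints(2) const(2) cong, of "Suc s"]
    by (intro fps_deriv_funpow_divide_cong ints const) simp
  ultimately show ?thesis ..
qed

end
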